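(* Let $\{G_n\}$ be a sequence of motif-based graphs satisfying internal regularity (there is $S_{\max}<\infty$ with $v(M)\le S_{\max}$ for all motifs $M$) and external regularity (the external graphs $G_n^{ext}$ on $n$ vertices have bounded average degree and converge in probability in the local weak sense to some $\mu^{ext}$). Let $M_1,\dots,M_n$ be the motifs of $G_n$ and $\mathbb E_n[v(M)]=\frac1n\sum_{i=1}^n v(M_i)$. Then there exists $\bar v<\infty$ such that $\mathbb E_n[v(M)]\to\bar v$ in probability, with respect to the randomness of the external graph and of the motif assignment.
   Context: A motif is a pair $M=(F,(d_v^{ext})_{v\in V(F)})$ with $F$ a finite connected simple graph and external degrees $d_v^{ext}$; $d(M)=\sum_v d_v^{ext}$, $v(M)=|V(F)|$. Given distributions $\mathcal M_d$ on motifs with $d(M)=d$ and an external graph $G_n^{ext}$ on $n$ vertices, $G_n$ is obtained by independently replacing each vertex of degree $d$ of $G_n^{ext}$ by a motif drawn from $\mathcal M_d$, with vertex $v$ of $F$ receiving $d_v^{ext}$ of the external edges. $\mathcal G_*$: rooted connected locally finite graphs up to root-preserving isomorphism; local weak convergence in probability to $\mu$: $\frac1{|V(H_n)|}\sum_vf(H_n,v)\to\int f\,d\mu$ in probability for every bounded $f$ depending only on a bounded-radius ball around the root. *)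

theory Defs
  imports "HOL-Probability.Probability"
begin

text \<open>A (possibly infinite) graph on vertex type nat is an edge predicate.
  A rooted graph is a pair (E, o); only the connected component of the root o matters.\<close>

type_synonym rgraph = "(nat \<Rightarrow> nat \<Rightarrow> bool) \<times> nat"

definition simple_lf_graph :: "(nat \<Rightarrow> nat \<Rightarrow> bool) \<Rightarrow> bool" where
  "simple_lf_graph E \<longleftrightarrow> (\<forall>u v. E u v \<longrightarrow> E v u) \<and> (\<forall>v. \<not> E v v) \<and> (\<forall>v. finite {u. E v u})"

text \<open>Representatives of elements of G_* (rooted, locally finite graphs).\<close>
definition RG :: "rgraph set" where
  "RG = {(E, r). simple_lf_graph E}"

definition ball_verts :: "nat \<Rightarrow> rgraph \<Rightarrow> nat set" where
  "ball_verts r G = {v. \<exists>k\<le>r. (fst G ^^ k) (snd G) v}"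

definition ball_iso :: "nat \<Rightarrow> rgraph \<Rightarrow> rgraph \<Rightarrow> bool" where
  "ball_iso r G H \<longleftrightarrow> (\<exists>\<phi>. bij_betw \<phi> (ball_verts r G) (ball_verts r H) \<and> \<phi> (snd G) = snd H \<and>
      (\<forall>u\<in>ball_verts r G. \<forall>v\<in>ball_verts r G. fst G u v \<longleftrightarrow> fst H (\<phi> u) (\<phi> v)))"

definition local_fun :: "(rgraph \<Rightarrow> real) \<Rightarrow> bool" where
  "local_fun f \<longleftrightarrow> (\<exists>r. \<forall>G\<in>RG. \<forall>H\<in>RG. ball_iso r G H \<longrightarrow> f G = f H)"

definition bounded_fun :: "(rgraph \<Rightarrow> real) \<Rightarrow> bool" where
  "bounded_fun f \<longleftrightarrow> (\<exists>B. \<forall>x. \<bar>f x\<bar> \<le> B)"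

definition RG_sets :: "rgraph set set" where
  "RG_sets = sigma_sets RG {{H\<in>RG. ball_iso r G H} | r G. G \<in> RG}"

definition rooted_graph_prob :: "rgraph measure \<Rightarrow> bool" where
  "rooted_graph_prob \<mu> \<longleftrightarrow> prob_space \<mu> \<and> space \<mu> = RG \<and> sets \<mu> = RG_sets"

definition fin_graph :: "nat \<Rightarrow> (nat \<Rightarrow> nat \<Rightarrow> bool) \<Rightarrow> bool" where
  "fin_graph n E \<longleftrightarrow> (\<forall>u v. E u v \<longrightarrow> u < n \<and> v < n \<and> E v u) \<and> (\<forall>v. \<not> E v v)"

definition deg :: "(nat \<Rightarrow> nat \<Rightarrow> bool) \<Rightarrow> nat \<Rightarrow> nat" where
  "deg E v = card {u. E v u}"

definition lwc_in_prob :: "(nat \<Rightarrow> (nat \<Rightarrow> nat \<Rightarrow> bool) pmf) \<Rightarrow> rgraph measure \<Rightarrow> bool" where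
  "lwc_in_prob Gn \<mu> \<longleftrightarrow>
     (\<forall>f. local_fun f \<and> bounded_fun f \<and> f \<in> borel_measurable \<mu> \<longrightarrow>
        (\<forall>\<epsilon>>0. (\<lambda>n. measure_pmf.prob (Gn n)
            {E. \<bar>(\<Sum>v<n. f (E, v)) / real n - (\<integral>x. f x \<partial>\<mu>)\<bar> > \<epsilon>}) \<longlonglongrightarrow> 0))"

record motif =
  mV :: "nat set"
  mE :: "nat \<Rightarrow> nat \<Rightarrow> bool"
  mdext :: "nat \<Rightarrow> nat"

text \<open>F = (mV, mE) a finite connected simple graph (nonempty), with external degrees mdext.\<close>
definition is_motif :: "motif \<Rightarrow> bool" where
  "is_motif M \<longleftrightarrow> finite (mV M) \<and> mV M \<noteq> {} \<and>
     (\<forall>u v. mE M u v \<longrightarrow> u \<in> mV M \<and> v \<in> mV M \<and> mE M v u) \<and> (\<forall>v. \<not> mE M v v) \<and>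
     (\<forall>u\<in>mV M. \<forall>v\<in>mV M. (mE M)\<^sup>*\<^sup>* u v)"

definition motif_d :: "motif \<Rightarrow> nat" where
  "motif_d M = (\<Sum>v\<in>mV M. mdext M v)"

definition motif_v :: "motif \<Rightarrow> nat" where
  "motif_v M = card (mV M)"

definition motif_law ::
  "(nat \<Rightarrow> (nat \<Rightarrow> nat \<Rightarrow> bool) pmf) \<Rightarrow> (nat \<Rightarrow> motif pmf) \<Rightarrow> nat \<Rightarrow> ((nat \<Rightarrow> nat \<Rightarrow> bool) \<times> (nat \<Rightarrow> motif)) pmf" where
  "motif_law Gn Md n =
     bind_pmf (Gn n) (\<lambda>E. map_pmf (\<lambda>m. (E, m)) (Pi_pmf {..<n} undefined (\<lambda>i. Md (deg E i))))"

end

theory Submission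
  imports Defs "HOL-Real_Asymp.Real_Asymp"
begin

text \<open>Given the external graph, the motif sizes are independent and take values in
  [0, Smax], so by Hoeffding's inequality their average is exponentially concentrated around the
  average of the conditional means m(deg v), where m(d) is the mean size of a motif drawn from
  M_d. The function G \<mapsto> m(deg root) is bounded and depends only on the ball of radius 1, so local
  weak convergence makes that average converge in probability to the integral of m(deg root)
  against the limit measure, which is the required constant.\<close>

lemma ball_verts_one: "ball_verts 1 G = insert (snd G) {u. fst G (snd G) u}"
  unfolding ball_verts_def by (auto simp: le_Suc_eq eq_OO)

lemma ball_verts_mono: "r \<le> s \<Longrightarrow> ball_verts r G \<subseteq> ball_verts s G"
  unfolding ball_verts_def using order_trans by blast

lemma ball_iso_deg_eq:
  assumes "1 \<le> r" and "ball_iso r G H"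
  shows "deg (fst G) (snd G) = deg (fst H) (snd H)"
proof -
  obtain \<phi> where bij: "bij_betw \<phi> (ball_verts r G) (ball_verts r H)" and root: "\<phi> (snd G) = snd H"
    and edge: "\<And>u v. u \<in> ball_verts r G \<Longrightarrow> v \<in> ball_verts r G \<Longrightarrow> fst G u v \<longleftrightarrow> fst H (\<phi> u) (\<phi> v)"
    using assms(2) unfolding ball_iso_def by blast
  have star_in_ball: "insert (snd K) {u. fst K (snd K) u} \<subseteq> ball_verts r K" for K
    using ball_verts_mono[OF assms(1), of K] unfolding ball_verts_one .
  have "\<phi> ` {u. fst G (snd G) u} = {w. fst H (snd H) w}"
  proof (intro equalityI subsetI)
    fix w assume "w \<in> \<phi> ` {u. fst G (snd G) u}"
    then show "w \<in> {w. fst H (snd H) w}" using edge star_in_ball[of G] root by auto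
  next
    fix w assume w: "w \<in> {w. fst H (snd H) w}"
    then obtain u where "u \<in> ball_verts r G" "w = \<phi> u"
      using star_in_ball[of H] bij by (auto simp: bij_betw_def)
    then show "w \<in> \<phi> ` {u. fst G (snd G) u}" using w edge star_in_ball[of G] root by auto
  qed
  moreover have "inj_on \<phi> {u. fst G (snd G) u}"
    using bij star_in_ball[of G] by (auto simp: bij_betw_def intro: inj_on_subset)
  ultimately show ?thesis by (metis card_image deg_def)
qed

lemma ex_bij_betw_atLeastAtMost_insert:
  assumes "finite N" and "r \<notin> N"
  obtains \<psi> where "bij_betw \<psi> {0..card N} (insert r N)" and "\<psi> 0 = r"
proof -
  obtain g where g: "bij_betw g {1..card N} N"
    using ex_bij_betw_nat_finite_1[OF assms(1)] by blast
  then have "bij_betw (g(0 := r)) {1..card N} N"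
    by (rule bij_betw_cong[THEN iffD1, rotated]) auto
  then have "bij_betw (g(0 := r)) ({1..card N} \<union> {0}) (N \<union> {r})"
    using notIn_Un_bij_betw[of 0 "{1..card N}" "g(0 := r)" N] assms(2) by simp
  moreover have "{1..card N} \<union> {0} = {0..card N}" by auto
  ultimately show thesis using that[of "g(0 := r)"] by simp
qed

lemma ball_iso_one_canonical:
  assumes "G \<in> RG"
  obtains E' where "\<And>u v. E' u v \<Longrightarrow> u \<le> deg (fst G) (snd G) \<and> v \<le> deg (fst G) (snd G)"
    and "(E', 0) \<in> RG" and "ball_iso 1 (E', 0) G"
proof -
  obtain E r where G: "G = (E, r)" by fastforce
  have sym: "\<And>u v. E u v \<Longrightarrow> E v u" and irrefl: "\<And>v. \<not> E v v" and fin: "finite {u. E r u}"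
    using assms by (auto simp: G RG_def simple_lf_graph_def)
  define d where "d = deg E r"
  obtain \<psi> where \<psi>: "bij_betw \<psi> {0..d} (insert r {u. E r u})" and \<psi>0: "\<psi> 0 = r"
    using ex_bij_betw_atLeastAtMost_insert[OF fin, of r] irrefl by (auto simp: d_def deg_def)
  define E' where "E' = (\<lambda>u v. u \<le> d \<and> v \<le> d \<and> E (\<psi> u) (\<psi> v))"
  have "simple_lf_graph E'"
    unfolding simple_lf_graph_def E'_def using sym irrefl
    by (auto intro: finite_subset[of _ "{..d}"])
  then have "(E', 0) \<in> RG" by (simp add: RG_def)
  have "\<psi> v \<noteq> r" if "v \<in> {1..d}" for v
    using that \<psi> \<psi>0 by (metis atLeastAtMost_iff bij_betw_iff_bijections le0 not_one_le_zero)
  moreover have "\<psi> v \<in> insert r {u. E r u}" if "v \<in> {1..d}" for v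
    using that \<psi> by (auto simp: bij_betw_def)
  ultimately have "{v. E' 0 v} = {1..d}"
    using irrefl \<psi>0 by (auto simp: E'_def Suc_le_eq intro!: Nat.gr0I)
  then have "ball_verts 1 (E', 0) = {0..d}" unfolding ball_verts_one by auto
  moreover have "ball_verts 1 G = insert r {u. E r u}" unfolding ball_verts_one G by simp
  ultimately have "ball_iso 1 (E', 0) G"
    unfolding ball_iso_def using \<psi> \<psi>0 by (intro exI[of _ \<psi>]) (auto simp: G E'_def)
  moreover have "\<And>u v. E' u v \<Longrightarrow> u \<le> d \<and> v \<le> d" by (simp add: E'_def)
  ultimately show thesis using \<open>(E', 0) \<in> RG\<close> by (intro that[of E']) (auto simp: G d_def)
qed

lemma finite_relations_on_atMost: "finite {R :: nat \<Rightarrow> nat \<Rightarrow> bool. \<forall>u v. R u v \<longrightarrow> u \<le> d \<and> v \<le> d}"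
proof (rule finite_subset)
  show "{R. \<forall>u v. R u v \<longrightarrow> u \<le> d \<and> v \<le> d} \<subseteq> (\<lambda>S u v. (u, v) \<in> S) ` Pow ({..d} \<times> {..d})"
  proof
    fix R :: "nat \<Rightarrow> nat \<Rightarrow> bool" assume "R \<in> {R. \<forall>u v. R u v \<longrightarrow> u \<le> d \<and> v \<le> d}"
    then have "{(u, v). R u v} \<in> Pow ({..d} \<times> {..d})" by auto
    then show "R \<in> (\<lambda>S u v. (u, v) \<in> S) ` Pow ({..d} \<times> {..d})" by (rule rev_image_eqI) simp
  qed
qed simp

text \<open>By the canonical representatives, a degree level set is a finite union of generating
  ball classes of radius 1.\<close>

lemma root_deg_level_set_in_RG_sets: "{G \<in> RG. deg (fst G) (snd G) = d} \<in> RG_sets"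
proof -
  define Can where "Can = {E'. (\<forall>u v. E' u v \<longrightarrow> u \<le> d \<and> v \<le> d) \<and> (E', 0) \<in> RG \<and> deg E' 0 = d}"
  have "finite Can"
    using finite_relations_on_atMost[of d] by (rule finite_subset[rotated]) (auto simp: Can_def)
  have "{G \<in> RG. deg (fst G) (snd G) = d} = (\<Union>E'\<in>Can. {H \<in> RG. ball_iso 1 (E', 0) H})"
  proof (intro equalityI subsetI)
    fix G assume G: "G \<in> {G \<in> RG. deg (fst G) (snd G) = d}"
    then obtain E' where "\<And>u v. E' u v \<Longrightarrow> u \<le> deg (fst G) (snd G) \<and> v \<le> deg (fst G) (snd G)"
      and "(E', 0) \<in> RG" and "ball_iso 1 (E', 0) G"
      using ball_iso_one_canonical by blast
    with G show "G \<in> (\<Union>E'\<in>Can. {H \<in> RG. ball_iso 1 (E', 0) H})"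
      using ball_iso_deg_eq[of 1 "(E', 0)" G] by (auto simp: Can_def)
  next
    fix H assume "H \<in> (\<Union>E'\<in>Can. {H \<in> RG. ball_iso 1 (E', 0) H})"
    then show "H \<in> {G \<in> RG. deg (fst G) (snd G) = d}"
      using ball_iso_deg_eq[of 1 _ H] by (fastforce simp: Can_def)
  qed
  moreover have "{H \<in> RG. ball_iso 1 (E', 0) H} \<in> RG_sets" if "E' \<in> Can" for E'
    using that unfolding RG_sets_def Can_def by (intro sigma_sets.Basic) blast
  ultimately show ?thesis
    using \<open>finite Can\<close> unfolding RG_sets_def by (auto intro!: sigma_sets_UNION countable_finite)
qed

lemma measurable_root_deg:
  assumes "rooted_graph_prob \<mu>"
  shows "(\<lambda>G. deg (fst G) (snd G)) \<in> measurable \<mu> (count_space UNIV)"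
proof -
  have "space \<mu> = RG" and "sets \<mu> = RG_sets"
    using assms by (auto simp: rooted_graph_prob_def)
  then show ?thesis
    unfolding measurable_count_space_eq2_countable
    using root_deg_level_set_in_RG_sets by (auto simp: vimage_def Int_def conj_commute)
qed

lemma lwc_in_prob_root_deg:
  fixes h :: "nat \<Rightarrow> real"
  assumes "lwc_in_prob Gn \<mu>" and "rooted_graph_prob \<mu>" and "\<And>d. \<bar>h d\<bar> \<le> B" and "\<epsilon> > 0"
  shows "(\<lambda>n. measure_pmf.prob (Gn n)
           {E. \<bar>(\<Sum>v<n. h (deg E v)) / real n - (\<integral>G. h (deg (fst G) (snd G)) \<partial>\<mu>)\<bar> > \<epsilon>}) \<longlonglongrightarrow> 0"
proof -
  let ?f = "\<lambda>G :: rgraph. h (deg (fst G) (snd G))"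
  have "local_fun ?f"
    unfolding local_fun_def using ball_iso_deg_eq[of 1] by (intro exI[of _ 1]) simp
  moreover have "bounded_fun ?f" unfolding bounded_fun_def using assms(3) by blast
  moreover have "?f \<in> borel_measurable \<mu>"
    using measurable_compose[OF measurable_root_deg[OF assms(2)], of h borel] by simp
  ultimately show ?thesis using assms(1,4) unfolding lwc_in_prob_def by auto
qed

lemma Pi_pmf_Hoeffding_abs:
  fixes p :: "'i \<Rightarrow> 'a pmf" and g :: "'a \<Rightarrow> real"
  assumes "finite I" and "I \<noteq> {}" and "a < b" and "t \<ge> 0"
    and range: "\<And>i x. i \<in> I \<Longrightarrow> x \<in> set_pmf (p i) \<Longrightarrow> g x \<in> {a..b}"
  shows "measure_pmf.prob (Pi_pmf I dflt p)
           {m. \<bar>(\<Sum>i\<in>I. g (m i)) - (\<Sum>i\<in>I. measure_pmf.expectation (p i) g)\<bar> \<ge> t}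
         \<le> 2 * exp (-2 * t\<^sup>2 / (real (card I) * (b - a)\<^sup>2))"
proof -
  let ?P = "Pi_pmf I dflt p" and ?X = "\<lambda>i m. g (m i)"
  have expectation: "measure_pmf.expectation ?P (?X i) = measure_pmf.expectation (p i) g" if "i \<in> I" for i
  proof -
    have "measure_pmf.expectation ?P (?X i) = measure_pmf.expectation (map_pmf (\<lambda>m. m i) ?P) g"
      by simp
    then show ?thesis using that assms(1) by (simp add: Pi_pmf_component)
  qed
  interpret Hoeffding_ineq "measure_pmf ?P" I ?X "\<lambda>_. a" "\<lambda>_. b" "\<Sum>i\<in>I. measure_pmf.expectation ?P (?X i)"
  proof unfold_locales
    show "prob_space.indep_vars (measure_pmf ?P) (\<lambda>_. borel) ?X I"
      using prob_space.indep_vars_compose2[OF measure_pmf.prob_space_axioms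
          indep_vars_Pi_pmf[OF assms(1), of dflt p], of "\<lambda>_. g" "\<lambda>_. borel"] by simp
    show "AE m in measure_pmf ?P. ?X i m \<in> {a..b}" if "i \<in> I" for i
      using that assms(1) range by (auto simp: AE_measure_pmf_iff set_Pi_pmf PiE_dflt_def)
  qed (use assms(1,3) in simp_all)
  have "(\<Sum>i\<in>I. (b - a)\<^sup>2) > 0" using assms(1-3) by (simp add: card_gt_0_iff)
  from Hoeffding_ineq_abs_ge[OF assms(4) this] show ?thesis
    using expectation by simp
qed

definition mean_motif_size :: "(nat \<Rightarrow> motif pmf) \<Rightarrow> nat \<Rightarrow> real" where
  "mean_motif_size Md d = measure_pmf.expectation (Md d) (\<lambda>M. real (motif_v M))"

lemma mean_motif_size_bounds:
  assumes "\<And>M. M \<in> set_pmf (Md d) \<Longrightarrow> motif_v M \<le> S"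
  shows "0 \<le> mean_motif_size Md d" and "mean_motif_size Md d \<le> real S"
proof -
  show "0 \<le> mean_motif_size Md d" unfolding mean_motif_size_def by simp
  have "integrable (measure_pmf (Md d)) (\<lambda>M. real (motif_v M))"
    using assms by (intro measure_pmf.integrable_const_bound[where B = "real S"]) (auto simp: AE_measure_pmf_iff)
  then show "mean_motif_size Md d \<le> real S"
    unfolding mean_motif_size_def using assms
    by (intro measure_pmf.integral_le_const) (auto simp: AE_measure_pmf_iff)
qed

lemma prob_motif_average_deviation_le:
  assumes bound: "\<And>d M. M \<in> set_pmf (Md d) \<Longrightarrow> motif_v M \<le> S" and "n > 0" and "\<epsilon> > 0"
  shows "measure_pmf.prob (Pi_pmf {..<n} undefined (\<lambda>i. Md (deg E i)))
           {m. \<bar>(\<Sum>i<n. real (motif_v (m i))) / real n - v\<bar> > \<epsilon>}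
         \<le> 2 * exp (- (\<epsilon>\<^sup>2 / (2 * (real S + 1)\<^sup>2) * real n))
           + indicator {E. \<bar>(\<Sum>i<n. mean_motif_size Md (deg E i)) / real n - v\<bar> > \<epsilon> / 2} E"
proof (cases "\<bar>(\<Sum>i<n. mean_motif_size Md (deg E i)) / real n - v\<bar> > \<epsilon> / 2")
  case True
  then show ?thesis by (intro add_increasing) auto
next
  case False
  have exponent: "-2 * (x * \<epsilon> / 2)\<^sup>2 / (x * q) = - (\<epsilon>\<^sup>2 / (2 * q) * x)" if "x > 0" and "q > 0" for x q :: real
    using that by (simp add: field_simps power2_eq_square)
  let ?P = "Pi_pmf {..<n} undefined (\<lambda>i. Md (deg E i))"
  let ?X = "\<lambda>m. \<Sum>i<n. real (motif_v (m i))" and ?Y = "\<Sum>i<n. mean_motif_size Md (deg E i)"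
  have "{m. \<bar>?X m / real n - v\<bar> > \<epsilon>} \<subseteq> {m. \<bar>?X m - ?Y\<bar> \<ge> real n * \<epsilon> / 2}"
  proof
    fix m assume "m \<in> {m. \<bar>?X m / real n - v\<bar> > \<epsilon>}"
    then have "\<bar>?X m / real n - ?Y / real n\<bar> > \<epsilon> / 2" using False by simp argo
    then show "m \<in> {m. \<bar>?X m - ?Y\<bar> \<ge> real n * \<epsilon> / 2}"
      using \<open>n > 0\<close> by (simp add: diff_divide_distrib[symmetric] field_simps)
  qed
  then have "measure_pmf.prob ?P {m. \<bar>?X m / real n - v\<bar> > \<epsilon>}
      \<le> measure_pmf.prob ?P {m. \<bar>?X m - ?Y\<bar> \<ge> real n * \<epsilon> / 2}"
    by (intro measure_pmf.finite_measure_mono) simp_all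
  also have "\<dots> \<le> 2 * exp (-2 * (real n * \<epsilon> / 2)\<^sup>2 / (real n * (real S + 1 - 0)\<^sup>2))"
    \<comment> \<open>the range is widened to [0, S + 1] so that its width is positive even for S = 0\<close>
    using Pi_pmf_Hoeffding_abs[of "{..<n}" 0 "real S + 1" "real n * \<epsilon> / 2" "\<lambda>i. Md (deg E i)"
        "\<lambda>M. real (motif_v M)" undefined] bound \<open>n > 0\<close> \<open>\<epsilon> > 0\<close>
    by (fastforce simp: mean_motif_size_def)
  also have "-2 * (real n * \<epsilon> / 2)\<^sup>2 / (real n * (real S + 1 - 0)\<^sup>2) = - (\<epsilon>\<^sup>2 / (2 * (real S + 1)\<^sup>2) * real n)"
    using exponent[of "real n" "(real S + 1)\<^sup>2"] \<open>n > 0\<close> by (simp add: add_pos_nonneg)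
  finally show ?thesis using False by simp
qed

lemma prob_bind_pmf_le:
  assumes "\<And>x. measure_pmf.prob (K x) A \<le> c + indicator B x" and "c \<ge> 0"
  shows "measure_pmf.prob (bind_pmf M K) A \<le> c + measure_pmf.prob M B"
proof -
  have "ennreal (measure_pmf.prob (bind_pmf M K) A) = (\<integral>\<^sup>+x. ennreal (measure_pmf.prob (K x) A) \<partial>M)"
    by (simp add: measure_pmf.emeasure_eq_measure[symmetric])
  also have "\<dots> \<le> (\<integral>\<^sup>+x. (ennreal c + indicator B x) \<partial>M)"
    using assms by (intro nn_integral_mono) (metis ennreal_indicator ennreal_leI ennreal_plus indicator_pos_le)
  also have "\<dots> = ennreal (c + measure_pmf.prob M B)"
    using assms(2) by (simp add: nn_integral_add measure_pmf.emeasure_eq_measure ennreal_plus)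
  finally show ?thesis
    by (metis ennreal_le_iff add_nonneg_nonneg measure_nonneg assms(2))
qed

lemma prob_motif_law_deviation_le:
  assumes bound: "\<And>d M. M \<in> set_pmf (Md d) \<Longrightarrow> motif_v M \<le> S" and "n > 0" and "\<epsilon> > 0"
  shows "measure_pmf.prob (motif_law Gn Md n)
           {(E, m). \<bar>(\<Sum>i<n. real (motif_v (m i))) / real n - v\<bar> > \<epsilon>}
         \<le> 2 * exp (- (\<epsilon>\<^sup>2 / (2 * (real S + 1)\<^sup>2) * real n))
           + measure_pmf.prob (Gn n) {E. \<bar>(\<Sum>i<n. mean_motif_size Md (deg E i)) / real n - v\<bar> > \<epsilon> / 2}"
  unfolding motif_law_def
  by (rule prob_bind_pmf_le) (use prob_motif_average_deviation_le[OF assms] in \<open>simp_all add: vimage_def\<close>)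

theorem proposition3p1:
  fixes Gext :: "nat \<Rightarrow> (nat \<Rightarrow> nat \<Rightarrow> bool) pmf"
    and Md :: "nat \<Rightarrow> motif pmf"
    and \<mu>ext :: "rgraph measure"
    and Smax :: nat
    and C :: real
  assumes motifs: "\<And>d M. M \<in> set_pmf (Md d) \<Longrightarrow> is_motif M \<and> motif_d M = d"
    and internal_reg: "\<And>d M. M \<in> set_pmf (Md d) \<Longrightarrow> motif_v M \<le> Smax"
    and ext_graphs: "\<And>n E. E \<in> set_pmf (Gext n) \<Longrightarrow> fin_graph n E"
    and avg_deg: "\<And>n E. E \<in> set_pmf (Gext n) \<Longrightarrow> (\<Sum>v<n. real (deg E v)) / real n \<le> C"
    and limit: "rooted_graph_prob \<mu>ext"
    and lwc: "lwc_in_prob Gext \<mu>ext"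
  shows "\<exists>vbar::real. \<forall>\<epsilon>>0.
           (\<lambda>n. measure_pmf.prob (motif_law Gext Md n)
              {(E, m). \<bar>(\<Sum>i<n. real (motif_v (m i))) / real n - vbar\<bar> > \<epsilon>}) \<longlonglongrightarrow> 0"
proof (intro exI allI impI)
  let ?vbar = "\<integral>G. mean_motif_size Md (deg (fst G) (snd G)) \<partial>\<mu>ext"
  fix \<epsilon> :: real assume "\<epsilon> > 0"
  let ?dev = "\<lambda>n. measure_pmf.prob (motif_law Gext Md n)
      {(E, m). \<bar>(\<Sum>i<n. real (motif_v (m i))) / real n - ?vbar\<bar> > \<epsilon>}"
  let ?mean_dev = "\<lambda>n. measure_pmf.prob (Gext n)
      {E. \<bar>(\<Sum>i<n. mean_motif_size Md (deg E i)) / real n - ?vbar\<bar> > \<epsilon> / 2}"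
  define c where "c = \<epsilon>\<^sup>2 / (2 * (real Smax + 1)\<^sup>2)"
  have "c > 0" using \<open>\<epsilon> > 0\<close> by (simp add: c_def add_pos_nonneg)
  then have "(\<lambda>n. 2 * exp (- (c * real n))) \<longlonglongrightarrow> 0" by real_asymp
  moreover have "\<bar>mean_motif_size Md d\<bar> \<le> real Smax" for d
    using mean_motif_size_bounds[OF internal_reg] by simp
  then have "?mean_dev \<longlonglongrightarrow> 0"
    by (rule lwc_in_prob_root_deg[OF lwc limit]) (use \<open>\<epsilon> > 0\<close> in simp)
  ultimately have upper: "(\<lambda>n. 2 * exp (- (c * real n)) + ?mean_dev n) \<longlonglongrightarrow> 0"
    by (rule tendsto_add_zero)
  have bound: "\<forall>\<^sub>F n in sequentially. ?dev n \<le> 2 * exp (- (c * real n)) + ?mean_dev n"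
    using prob_motif_law_deviation_le[OF internal_reg _ \<open>\<epsilon> > 0\<close>]
    by (intro eventually_sequentiallyI[of 1]) (simp add: c_def)
  show "?dev \<longlonglongrightarrow> 0"
    by (rule tendsto_sandwich[OF _ bound tendsto_const upper]) simp
qed

end
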